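(* $$F^{1;2;2}_{1;1;1}\left[\left.\begin{matrix}2\\ \tfrac52\end{matrix};\begin{matrix}1,1\\ 2\end{matrix};\begin{matrix}\tfrac12,\tfrac12\\ 1\end{matrix}\right|1,1\right]=3\pi\log 2.$$
   Context: $(a)_n=\Gamma(a+n)/\Gamma(a)$. The Kampé de Fériet function is $$F^{A;B;B'}_{C;D;D'}\left[\left.\begin{matrix}a_1,\dots,a_A\\ c_1,\dots,c_C\end{matrix};\begin{matrix}b_1,\dots,b_B\\ d_1,\dots,d_D\end{matrix};\begin{matrix}b'_1,\dots,b'_{B'}\\ d'_1,\dots,d'_{D'}\end{matrix}\right|x,y\right]=\sum_{m,n\ge0}\frac{\prod_i(a_i)_{m+n}\prod_i(b_i)_m\prod_i(b'_i)_n}{\prod_i(c_i)_{m+n}\prod_i(d_i)_m\prod_i(d'_i)_n}\frac{x^my^n}{m!\,n!}.$$ *)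

theory Defs
  imports "HOL-Analysis.Analysis"
begin

text \<open>General term of the Kampe de Feriet double series
  F^{A;B;B'}_{C;D;D'}[as; bs; bs'; cs; ds; ds' | x, y], indexed by (m,n),
  with (a)_k written as pochhammer a k.\<close>
definition kdf_term ::
  "real list \<Rightarrow> real list \<Rightarrow> real list \<Rightarrow> real list \<Rightarrow> real list \<Rightarrow> real list
   \<Rightarrow> real \<Rightarrow> real \<Rightarrow> nat \<times> nat \<Rightarrow> real" where
  "kdf_term as cs bs ds bs' ds' x y = (\<lambda>(m, n).
     (prod_list (map (\<lambda>a. pochhammer a (m + n)) as)
      * prod_list (map (\<lambda>b. pochhammer b m) bs)
      * prod_list (map (\<lambda>b. pochhammer b n) bs'))
     / (prod_list (map (\<lambda>c. pochhammer c (m + n)) cs)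
      * prod_list (map (\<lambda>d. pochhammer d m) ds)
      * prod_list (map (\<lambda>d. pochhammer d n) ds'))
     * x ^ m * y ^ n / (fact m * fact n))"

end

theory Submission
  imports Defs "HOL-Real_Asymp.Real_Asymp"
begin

text \<open>Write c n = inv_sqrt_coeff n = (1/2)_n / n! (the coefficients of (1 - t) powr (-1/2))
  and r k = poch_ratio k = (2)_k / (5/2)_k; the (m, n) term is then r (m + n) * (c n)^2 / (m + 1).
  Summing over m first telescopes and gives 3 * c n / (2n + 1) * odd_harmonic n, where
  odd_harmonic n = sum_{j<=n} 1/(2j + 1). Expanding odd_harmonic n as the telescoping series
  sum_k (1/(2k + 1) - 1/(2k + 2n + 3)) and summing the nonnegative double series over n first,
  partial fractions reduce everything to the Beta integrals sum_n c n / (2n + 2k + 1) = pi * c k / 2;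
  what is left are sum_k 1/((2k + 1)(2k + 2)) = ln 2 and
  sum_k c (k + 1) / (k + 1) = integral_0^1 ((1 - t) powr (-1/2) - 1) / t dt = 2 ln 2.\<close>

lemma has_sum_Sigma_nonneg:
  fixes f :: "'a \<times> 'b \<Rightarrow> real"
  assumes "\<And>x y. 0 \<le> f (x, y)"
    and "\<And>x. ((\<lambda>y. f (x, y)) has_sum g x) UNIV"
    and "(g has_sum S) UNIV"
  shows "(f has_sum S) UNIV"
proof -
  have "f summable_on Sigma UNIV (\<lambda>_. UNIV)"
    using assms by (intro summable_on_SigmaI[where g = g]) (auto dest: has_sum_imp_summable)
  then have "(f has_sum S) (Sigma UNIV (\<lambda>_. UNIV))"
    using assms by (intro has_sum_SigmaI)
  then show ?thesis by simp
qed

lemma has_sum_Sigma_nonneg':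
  fixes f :: "'a \<times> 'b \<Rightarrow> real"
  assumes "\<And>x y. 0 \<le> f (x, y)"
    and "\<And>y. ((\<lambda>x. f (x, y)) has_sum g y) UNIV"
    and "(g has_sum S) UNIV"
  shows "(f has_sum S) UNIV"
proof -
  have "((\<lambda>(y, x). f (x, y)) has_sum S) UNIV"
    using assms by (intro has_sum_Sigma_nonneg[where g = g]) auto
  then show ?thesis
    using has_sum_swap[where f = f and S = S and A = UNIV and B = UNIV] by simp
qed

lemma sums_integral_termwise_nonneg:
  fixes c I :: "nat \<Rightarrow> real" and h P :: "real \<Rightarrow> real"
  assumes c: "\<And>n. 0 \<le> c n"
    and h: "\<And>t. 0 \<le> t \<Longrightarrow> t < 1 \<Longrightarrow> 0 \<le> h t"
    and P: "\<And>t. 0 \<le> t \<Longrightarrow> t < 1 \<Longrightarrow> (\<lambda>n. c n * t ^ n) sums P t"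
    and I: "\<And>n. ((\<lambda>t. h t * t ^ n) has_integral I n) {0..1}"
    and J: "((\<lambda>t. h t * P t) has_integral J) {0..1}"
  shows "(\<lambda>n. c n * I n) sums J"
proof -
  define f where "f N t = (if t < 1 then h t * (\<Sum>n<N. c n * t ^ n) else 0)" for N t
  define g where "g t = (if t < 1 then h t * P t else 0)" for t
  have f_int: "(f N has_integral (\<Sum>n<N. c n * I n)) {0..1}" for N
  proof -
    have "((\<lambda>t. \<Sum>n<N. c n * (h t * t ^ n)) has_integral (\<Sum>n<N. c n * I n)) {0..1}"
      by (intro has_integral_sum has_integral_mult_right I) auto
    then have "((\<lambda>t. h t * (\<Sum>n<N. c n * t ^ n)) has_integral (\<Sum>n<N. c n * I n)) {0..1}"
      by (simp add: sum_distrib_left mult_ac)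
    then show ?thesis
      by (rule has_integral_spike_finite[where S = "{1}", rotated 2]) (auto simp: f_def)
  qed
  have g_int: "(g has_integral J) {0..1}"
    by (rule has_integral_spike_finite[where S = "{1}", OF _ _ J]) (auto simp: g_def)
  have partial_le: "(\<Sum>n<N. c n * t ^ n) \<le> P t" if "0 \<le> t" "t < 1" for N t
  proof -
    have "(\<Sum>n<N. c n * t ^ n) \<le> (\<Sum>n. c n * t ^ n)"
      using P[OF that] c that by (intro sum_le_suminf) (auto simp: sums_iff)
    then show ?thesis
      using P[OF that] by (simp add: sums_iff)
  qed
  have "g integrable_on {0..1} \<and> (\<lambda>N. integral {0..1} (f N)) \<longlonglongrightarrow> integral {0..1} g"
  proof (rule monotone_convergence_increasing)
    show "f N integrable_on {0..1}" for N
      using f_int by blast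
    show "f N t \<le> f (Suc N) t" if "t \<in> {0..1}" for N t
      using that c h by (auto simp: f_def intro!: mult_left_mono)
    show "(\<lambda>N. f N t) \<longlonglongrightarrow> g t" if "t \<in> {0..1}" for t
      using that P[of t] by (auto simp: f_def g_def sums_def intro!: tendsto_mult_left)
    have "\<bar>integral {0..1} (f N)\<bar> \<le> J" for N
    proof -
      have "0 \<le> integral {0..1} (f N)"
        using f_int c h by (intro integral_nonneg) (auto simp: f_def intro!: sum_nonneg mult_nonneg_nonneg)
      moreover have "integral {0..1} (f N) \<le> J"
        unfolding integral_unique[OF f_int]
        by (rule has_integral_le[OF f_int g_int]) (auto simp: f_def g_def h partial_le intro!: mult_left_mono)
      ultimately show ?thesis by simp
    qed
    then show "bounded (range (\<lambda>N. integral {0..1} (f N)))"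
      by (auto simp: bounded_iff)
  qed
  then show ?thesis
    using integral_unique[OF f_int] integral_unique[OF g_int] by (simp add: sums_def)
qed

definition inv_sqrt_coeff :: "nat \<Rightarrow> real" where
  "inv_sqrt_coeff n = pochhammer (1/2) n / fact n"

lemma inv_sqrt_coeff_0 [simp]: "inv_sqrt_coeff 0 = 1"
  by (simp add: inv_sqrt_coeff_def)

lemma inv_sqrt_coeff_nonneg: "0 \<le> inv_sqrt_coeff n"
  by (simp add: inv_sqrt_coeff_def pochhammer_nonneg)

lemma inv_sqrt_coeff_Suc: "inv_sqrt_coeff (Suc n) = inv_sqrt_coeff n * (2 * real n + 1) / (2 * real n + 2)"
  by (simp add: inv_sqrt_coeff_def pochhammer_Suc field_simps)

lemma inv_sqrt_coeff_sums:
  assumes "0 \<le> t" "t < 1"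
  shows "(\<lambda>n. inv_sqrt_coeff n * t ^ n) sums (1 - t) powr (-1/2)"
proof -
  have "((-1/2) gchoose n) * (-t) ^ n = inv_sqrt_coeff n * t ^ n" for n
  proof -
    have "((-1/2) gchoose n) * (-t) ^ n = ((-1) ^ n * (-1) ^ n) * inv_sqrt_coeff n * t ^ n"
      by (simp add: gbinomial_pochhammer inv_sqrt_coeff_def power_minus[of t])
    also have "(-1::real) ^ n * (-1) ^ n = 1"
      by (simp flip: power_add)
    finally show ?thesis by simp
  qed
  moreover have "(\<lambda>n. ((-1/2) gchoose n) * (-t) ^ n) sums (1 + (-t)) powr (-1/2)"
    using assms by (intro gen_binomial_real) auto
  ultimately show ?thesis by simp
qed

lemma inv_sqrt_coeff_shifted_sums:
  assumes "0 \<le> t" "t < 1"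
  shows "(\<lambda>n. inv_sqrt_coeff (Suc n) * t ^ n) sums (1 / (sqrt (1 - t) * (1 + sqrt (1 - t))))"
proof (cases "t = 0")
  case True
  then show ?thesis
    using powser_sums_zero[of "\<lambda>n. inv_sqrt_coeff (Suc n)"]
    by (simp add: inv_sqrt_coeff_Suc)
next
  case False
  define u where "u = sqrt (1 - t)"
  have u: "0 < u" "u < 1" "t = (1 - u) * (1 + u)"
    using assms False by (auto simp: u_def algebra_simps)
  have "(1 - t) powr (-1/2) = 1 / u"
    using assms by (simp add: u_def powr_minus_divide powr_half_sqrt)
  then have "(\<lambda>n. inv_sqrt_coeff (Suc n) * t ^ Suc n) sums (1 / u - 1)"
    using inv_sqrt_coeff_sums[OF assms] by (subst sums_Suc_iff) simp
  then have "(\<lambda>n. inv_sqrt_coeff (Suc n) * t ^ Suc n / t) sums ((1 / u - 1) / t)"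
    by (rule sums_divide)
  moreover have "(1 / u - 1) / t = 1 / (u * (1 + u))"
  proof -
    have "t / (u * (1 + u)) = (1 - u) / u"
      unfolding u(3) using u by (subst mult_divide_mult_cancel_right) auto
    also have "\<dots> = 1 / u - 1"
      using u by (simp add: field_simps)
    finally have "1 / u - 1 = t / (u * (1 + u))" by simp
    then show ?thesis
      using False by simp
  qed
  ultimately show ?thesis
    using False by (simp add: u_def)
qed

lemma Beta_of_nat_plus_half: "Beta (real k + 1/2) (1/2) = pi * inv_sqrt_coeff k"
proof -
  have half: "(1/2::real) \<notin> \<int>\<^sub>\<le>\<^sub>0"
    by (auto elim!: nonpos_Ints_cases)
  have "Gamma (1/2 + real k) = pochhammer (1/2) k * Gamma (1/2)"
    using pochhammer_Gamma[OF half, of k] half by (simp add: Gamma_eq_zero_iff field_simps)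
  moreover have "Gamma (real k + 1/2 + 1/2) = fact k"
    using Gamma_fact[of k, where 'a = real] by (simp add: add.commute)
  ultimately show ?thesis
    by (simp add: Beta_def Gamma_one_half_real inv_sqrt_coeff_def add.commute)
qed

lemma inv_sqrt_coeff_div_odd_sums:
  "(\<lambda>n. inv_sqrt_coeff n / (2 * real n + 2 * real k + 1)) sums (pi * inv_sqrt_coeff k / 2)"
proof -
  have "(\<lambda>n. inv_sqrt_coeff n * (1 / (n + k + 1/2))) sums Beta (k + 1/2) (1/2)"
  proof (rule sums_integral_termwise_nonneg[where h = "\<lambda>t. t powr (k - 1/2)"])
    show "((\<lambda>t. t powr (k - 1/2) * (1 - t) powr (-1/2)) has_integral Beta (k + 1/2) (1/2)) {0..1}"
      using has_integral_Beta_real[of "k + 1/2" "1/2"] by simp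
    show "((\<lambda>t. t powr (k - 1/2) * t ^ n) has_integral (1 / (n + k + 1/2))) {0..1}" for n
    proof -
      have int: "((\<lambda>t. t powr (n + k - 1/2)) has_integral (1 / (n + k + 1/2))) {0..1}"
        using has_integral_powr_from_0[of "n + k - 1/2" 1] by (simp add: add.commute)
      have eq: "t powr (k - 1/2) * t ^ n = t powr (n + k - 1/2)" if "0 < t" for t :: real
        using that by (simp add: powr_realpow [symmetric] flip: powr_add) (simp add: algebra_simps)
      show ?thesis
        by (rule has_integral_spike_finite[where S = "{0}", OF _ _ int]) (auto simp: eq)
    qed
  qed (use inv_sqrt_coeff_nonneg inv_sqrt_coeff_sums in auto)
  then have "(\<lambda>n. inv_sqrt_coeff n * (1 / (n + k + 1/2)) / 2) sums (pi * inv_sqrt_coeff k / 2)"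
    by (intro sums_divide) (simp add: Beta_of_nat_plus_half)
  moreover have "inv_sqrt_coeff n * (1 / (n + k + 1/2)) / 2 = inv_sqrt_coeff n / (2 * real n + 2 * real k + 1)" for n
    by (simp add: divide_simps)
  ultimately show ?thesis
    by (simp only:)
qed

lemma has_integral_inv_sqrt_one_plus_sqrt:
  "((\<lambda>t. 1 / (sqrt (1 - t) * (1 + sqrt (1 - t)))) has_integral 2 * ln 2) {0..1}"
proof -
  define F where "F t = - 2 * ln (1 + sqrt (1 - t))" for t :: real
  have "((\<lambda>t. 1 / (sqrt (1 - t) * (1 + sqrt (1 - t)))) has_integral F 1 - F 0) {0..1}"
  proof (rule fundamental_theorem_of_calculus_interior)
    have "1 + sqrt (1 - t) \<noteq> 0" if "t \<le> 1" for t :: real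
      using that real_sqrt_ge_zero[of "1 - t"] by linarith
    then show "continuous_on {0..1} F"
      unfolding F_def by (auto intro!: continuous_intros)
    show "(F has_vector_derivative 1 / (sqrt (1 - t) * (1 + sqrt (1 - t)))) (at t)"
      if "t \<in> {0<..<1}" for t
    proof -
      have s: "0 < sqrt (1 - t)"
        using that by simp
      have "(F has_real_derivative 1 / (sqrt (1 - t) * (1 + sqrt (1 - t)))) (at t)"
        unfolding F_def using that s
        by (auto intro!: derivative_eq_intros simp: add_pos_nonneg)
           (simp add: divide_simps s)
      then show ?thesis
        by (simp add: has_real_derivative_iff_has_vector_derivative)
    qed
  qed simp
  then show ?thesis
    by (simp add: F_def)
qed

lemma inv_sqrt_coeff_shifted_div_sums:
  "(\<lambda>n. inv_sqrt_coeff (Suc n) / (real n + 1)) sums (2 * ln 2)"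
proof -
  have "(\<lambda>n. inv_sqrt_coeff (Suc n) * (1 / (real n + 1))) sums (2 * ln 2)"
  proof (rule sums_integral_termwise_nonneg[where h = "\<lambda>_. 1"])
    show "((\<lambda>t. 1 * t ^ n) has_integral (1 / (real n + 1))) {0..1}" for n
    proof -
      have "((\<lambda>t. t powr n) has_integral (1 / (real n + 1))) {0..1}"
        using has_integral_powr_from_0[of "real n" 1] by (simp add: add.commute)
      then show ?thesis
        by (rule has_integral_spike_finite[where S = "{0}", rotated 2]) (auto simp: powr_realpow)
    qed
  qed (use inv_sqrt_coeff_nonneg inv_sqrt_coeff_shifted_sums
           has_integral_inv_sqrt_one_plus_sqrt in auto)
  then show ?thesis
    by simp
qed

definition poch_ratio :: "nat \<Rightarrow> real" where
  "poch_ratio k = pochhammer 2 k / pochhammer (5/2) k"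

lemma poch_ratio_0 [simp]: "poch_ratio 0 = 1"
  by (simp add: poch_ratio_def)

lemma poch_ratio_nonneg: "0 \<le> poch_ratio k"
  by (simp add: poch_ratio_def pochhammer_nonneg)

lemma poch_ratio_Suc: "poch_ratio (Suc k) = poch_ratio k * (2 * real k + 4) / (2 * real k + 5)"
proof -
  have "0 < pochhammer (5/2::real) k"
    by (intro pochhammer_pos) simp
  then show ?thesis
    by (simp add: poch_ratio_def pochhammer_Suc field_simps)
qed

text \<open>poch_ratio k decays like k powr (-1/2); bounding its square avoids Gamma asymptotics.\<close>

lemma poch_ratio_squared_le: "poch_ratio k ^ 2 \<le> 2 / (real k + 2)"
proof (induction k)
  case (Suc k)
  have "poch_ratio (Suc k) ^ 2 = poch_ratio k ^ 2 * ((2 * real k + 4) / (2 * real k + 5)) ^ 2"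
    by (simp add: poch_ratio_Suc power_mult_distrib power_divide)
  also have "\<dots> \<le> 2 / (real k + 2) * ((2 * real k + 4) / (2 * real k + 5)) ^ 2"
    by (intro mult_right_mono Suc.IH) auto
  also have "\<dots> = 8 * (real k + 2) / (2 * real k + 5) ^ 2"
    by (simp add: divide_simps power2_eq_square) (simp add: algebra_simps)
  also have "\<dots> \<le> 2 / (real (Suc k) + 2)"
    by (simp add: divide_simps power2_eq_square) (simp add: algebra_simps)
  finally show ?case .
qed simp

lemma poch_ratio_tendsto_0: "poch_ratio \<longlonglongrightarrow> 0"
proof -
  have "(\<lambda>k. poch_ratio k ^ 2) \<longlonglongrightarrow> 0"
  proof (rule tendsto_sandwich[of "\<lambda>_. 0" _ _ "\<lambda>k. 2 / (real k + 2)"])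
    show "(\<lambda>k. 2 / (real k + 2)) \<longlonglongrightarrow> 0"
      by real_asymp
  qed (use poch_ratio_squared_le in auto)
  then have "(\<lambda>k. sqrt (poch_ratio k ^ 2)) \<longlonglongrightarrow> sqrt 0"
    by (intro tendsto_real_sqrt)
  then show ?thesis
    using poch_ratio_nonneg by simp
qed

definition odd_harmonic :: "nat \<Rightarrow> real" where
  "odd_harmonic n = (\<Sum>j\<le>n. 1 / (2 * real j + 1))"

lemma odd_harmonic_Suc: "odd_harmonic (Suc n) = odd_harmonic n + 1 / (2 * real n + 3)"
  by (simp add: odd_harmonic_def add.commute)

lemma odd_harmonic_telescoping_sums:
  "(\<lambda>k. 1 / (2 * real k + 1) - 1 / (2 * real k + 2 * real n + 3)) sums odd_harmonic n"
proof (induction n)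
  case 0
  have "(\<lambda>k. 1 / (2 * real k + 1)) \<longlonglongrightarrow> 0"
    by real_asymp
  then have "(\<lambda>k. 1 / (2 * real k + 1) - 1 / (2 * real (Suc k) + 1)) sums (1 - 0)"
    using telescope_sums' by fastforce
  then show ?case
    by (simp add: odd_harmonic_def add.commute)
next
  case (Suc n)
  have "(\<lambda>k. 1 / (2 * real k + 2 * real n + 3)) \<longlonglongrightarrow> 0"
    by real_asymp
  then have "(\<lambda>k. 1 / (2 * real k + 2 * real n + 3) - 1 / (2 * real (Suc k) + 2 * real n + 3))
      sums (1 / (2 * real n + 3) - 0)"
    using telescope_sums' by fastforce
  from sums_add[OF Suc this] show ?case
    by (simp add: odd_harmonic_Suc algebra_simps)
qed

lemma poch_ratio_times_inv_sqrt_coeff: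
  "(2 * real n + 1) * inv_sqrt_coeff n * poch_ratio n / (real n + 1) = 3 / (2 * real n + 3)"
proof (induction n)
  case (Suc n)
  have "(2 * real (Suc n) + 1) * inv_sqrt_coeff (Suc n) * poch_ratio (Suc n) / (real (Suc n) + 1)
      = (2 * real n + 1) * inv_sqrt_coeff n * poch_ratio n / (real n + 1) * ((2 * real n + 3) / (2 * real n + 5))"
    by (simp add: inv_sqrt_coeff_Suc poch_ratio_Suc divide_simps) (simp add: algebra_simps)
  also have "\<dots> = 3 / (2 * real (Suc n) + 3)"
    unfolding Suc by (simp add: divide_simps) (simp add: algebra_simps)
  finally show ?case .
qed simp

lemma poch_ratio_row_sums:
  "(\<lambda>m. (2 * real n + 1) * inv_sqrt_coeff n * poch_ratio (m + n) / (real m + 1)) sums (3 * odd_harmonic n)"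
proof (induction n)
  case 0
  define G where "G m = poch_ratio m * (2 * real m + 3) / (real m + 1)" for m
  have "G \<longlonglongrightarrow> 0 * 2"
  proof -
    have "(\<lambda>m. poch_ratio m * ((2 * real m + 3) / (real m + 1))) \<longlonglongrightarrow> 0 * 2"
      by (intro tendsto_mult poch_ratio_tendsto_0) real_asymp
    then show ?thesis
      by (simp add: G_def[abs_def])
  qed
  then have "(\<lambda>m. G m - G (Suc m)) sums (G 0 - 0)"
    by (intro telescope_sums') simp
  moreover have "G m - G (Suc m) = poch_ratio m / (real m + 1)" for m
    unfolding G_def by (simp add: poch_ratio_Suc divide_simps) (simp add: algebra_simps)
  ultimately show ?case
    by (simp add: G_def odd_harmonic_def)
next
  case (Suc n)
  txt \<open>Passing from n to n + 1 adds a telescoping series in m.\<close>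
  define c where "c = (2 * real n + 1) * inv_sqrt_coeff n / (real n + 1)"
  have "(\<lambda>m. poch_ratio (m + n)) \<longlonglongrightarrow> 0"
    using LIMSEQ_ignore_initial_segment[OF poch_ratio_tendsto_0, of n] by simp
  then have "(\<lambda>m. poch_ratio (m + n) - poch_ratio (Suc m + n)) sums (poch_ratio (0 + n) - 0)"
    by (rule telescope_sums')
  then have "(\<lambda>m. c * (poch_ratio (m + n) - poch_ratio (Suc (m + n)))) sums (c * poch_ratio n)"
    by (intro sums_mult) simp
  moreover have "c * poch_ratio n = 3 / (2 * real n + 3)"
    using poch_ratio_times_inv_sqrt_coeff[of n] by (simp add: c_def)
  ultimately have "(\<lambda>m. c * (poch_ratio (m + n) - poch_ratio (Suc (m + n)))) sums (3 / (2 * real n + 3))"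
    by simp
  moreover have "(2 * real (Suc n) + 1) * inv_sqrt_coeff (Suc n) * poch_ratio (m + Suc n) / (real m + 1)
      = (2 * real n + 1) * inv_sqrt_coeff n * poch_ratio (m + n) / (real m + 1)
        + c * (poch_ratio (m + n) - poch_ratio (Suc (m + n)))" for m
    unfolding c_def by (simp add: inv_sqrt_coeff_Suc poch_ratio_Suc divide_simps) (simp add: algebra_simps)
  ultimately show ?case
    using sums_add[OF Suc] by (simp add: odd_harmonic_Suc)
qed

lemma odd_harmonic_kernel_column_sums:
  "(\<lambda>n. inv_sqrt_coeff n / (2 * real n + 1) * (1 / (2 * real k + 1) - 1 / (2 * real k + 2 * real n + 3)))
     sums (pi / 2 * (1 / ((2 * real k + 1) * (2 * real k + 2)) + inv_sqrt_coeff (Suc k) / (2 * real k + 2)))"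
proof -
  define A where "A = 1 / ((2 * real k + 1) * (2 * real k + 2))"
  define B where "B = 1 / (2 * real k + 2)"
  have "(\<lambda>n. A * (inv_sqrt_coeff n / (2 * real n + 2 * real 0 + 1))
            + B * (inv_sqrt_coeff n / (2 * real n + 2 * real (Suc k) + 1)))
      sums (A * (pi * inv_sqrt_coeff 0 / 2) + B * (pi * inv_sqrt_coeff (Suc k) / 2))"
    by (intro sums_add sums_mult inv_sqrt_coeff_div_odd_sums)
  moreover have "A * (inv_sqrt_coeff n / (2 * real n + 2 * real 0 + 1))
      + B * (inv_sqrt_coeff n / (2 * real n + 2 * real (Suc k) + 1))
    = inv_sqrt_coeff n / (2 * real n + 1) * (1 / (2 * real k + 1) - 1 / (2 * real k + 2 * real n + 3))"
    for n
    unfolding A_def B_def by (simp add: divide_simps) (simp add: algebra_simps)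
  ultimately have "(\<lambda>n. inv_sqrt_coeff n / (2 * real n + 1) * (1 / (2 * real k + 1) - 1 / (2 * real k + 2 * real n + 3)))
      sums (A * (pi * inv_sqrt_coeff 0 / 2) + B * (pi * inv_sqrt_coeff (Suc k) / 2))"
    by (simp only:)
  then show ?thesis
    by (simp add: A_def B_def algebra_simps)
qed

lemma odd_harmonic_kernel_column_sums_sums:
  "(\<lambda>k. pi / 2 * (1 / ((2 * real k + 1) * (2 * real k + 2)) + inv_sqrt_coeff (Suc k) / (2 * real k + 2)))
     sums (pi * ln 2)"
proof -
  have "(\<lambda>k. inverse (real (2 * k + 1)) - inverse (real (2 * k + 2))) sums ln 2"
    by (rule alternating_harmonic_series_sums')
  moreover have "inverse (real (2 * k + 1)) - inverse (real (2 * k + 2))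
      = 1 / ((2 * real k + 1) * (2 * real k + 2))" for k
    by (simp add: divide_simps) (simp add: algebra_simps)
  ultimately have "(\<lambda>k. 1 / ((2 * real k + 1) * (2 * real k + 2))) sums ln 2"
    by simp
  moreover have "(\<lambda>k. inv_sqrt_coeff (Suc k) / (2 * real k + 2)) sums ln 2"
    using sums_divide[OF inv_sqrt_coeff_shifted_div_sums, of 2] by (simp add: field_simps)
  ultimately have "(\<lambda>k. pi / 2 * (1 / ((2 * real k + 1) * (2 * real k + 2))
                                 + inv_sqrt_coeff (Suc k) / (2 * real k + 2)))
      sums (pi / 2 * (ln 2 + ln 2))"
    by (rule sums_mult[OF sums_add])
  then show ?thesis
    by simp
qed

lemma inv_sqrt_coeff_odd_harmonic_has_sum:
  "((\<lambda>n. inv_sqrt_coeff n / (2 * real n + 1) * odd_harmonic n) has_sum (pi * ln 2)) UNIV"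
proof -
  define f where "f = (\<lambda>(n, k). inv_sqrt_coeff n / (2 * real n + 1)
                         * (1 / (2 * real k + 1) - 1 / (2 * real k + 2 * real n + 3)))"
  have f_nonneg: "0 \<le> f (n, k)" for n k
    by (simp add: f_def inv_sqrt_coeff_nonneg frac_le)
  have "((\<lambda>n. f (n, k)) has_sum (pi / 2 * (1 / ((2 * real k + 1) * (2 * real k + 2))
          + inv_sqrt_coeff (Suc k) / (2 * real k + 2)))) UNIV" for k
    using odd_harmonic_kernel_column_sums[of k] f_nonneg
    unfolding f_def prod.case by (rule sums_nonneg_imp_has_sum)
  moreover have "((\<lambda>k. pi / 2 * (1 / ((2 * real k + 1) * (2 * real k + 2))
          + inv_sqrt_coeff (Suc k) / (2 * real k + 2))) has_sum (pi * ln 2)) UNIV"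
    using odd_harmonic_kernel_column_sums_sums
    by (rule sums_nonneg_imp_has_sum) (simp add: inv_sqrt_coeff_nonneg)
  ultimately have "(f has_sum (pi * ln 2)) UNIV"
    by (rule has_sum_Sigma_nonneg'[where f = f, OF f_nonneg])
  then have "(f has_sum (pi * ln 2)) (Sigma UNIV (\<lambda>_. UNIV))"
    by simp
  moreover have "((\<lambda>k. f (n, k)) has_sum (inv_sqrt_coeff n / (2 * real n + 1) * odd_harmonic n)) UNIV" for n
    using sums_mult[OF odd_harmonic_telescoping_sums, of "inv_sqrt_coeff n / (2 * real n + 1)" n] f_nonneg
    unfolding f_def prod.case by (rule sums_nonneg_imp_has_sum)
  ultimately show ?thesis
    by (rule has_sum_SigmaD)
qed

lemma kdf_term_eq:
  "kdf_term [2] [5/2] [1, 1] [2] [1/2, 1/2] [1] 1 1 (m, n)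
     = inv_sqrt_coeff n / (2 * real n + 1)
       * ((2 * real n + 1) * inv_sqrt_coeff n * poch_ratio (m + n) / (real m + 1))"
proof -
  have "pochhammer (1::real) k = fact k" for k
    by (simp add: pochhammer_fact)
  moreover have "pochhammer (2::real) m = fact (Suc m)"
    using pochhammer_rec[of "1::real" m] by (simp add: pochhammer_fact)
  moreover have "0 < pochhammer (5/2::real) (m + n)"
    by (intro pochhammer_pos) simp
  ultimately show ?thesis
    by (simp add: kdf_term_def poch_ratio_def inv_sqrt_coeff_def divide_simps)
qed

theorem mainTheorem5:
  shows "(kdf_term [2] [5/2] [1, 1] [2] [1/2, 1/2] [1] 1 1 has_sum (3 * pi * ln 2)) UNIV"
proof (rule has_sum_Sigma_nonneg')
  show "0 \<le> kdf_term [2] [5/2] [1, 1] [2] [1/2, 1/2] [1] 1 1 (m, n)" for m n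
    by (simp add: kdf_term_eq inv_sqrt_coeff_nonneg poch_ratio_nonneg)
  show "((\<lambda>m. kdf_term [2] [5/2] [1, 1] [2] [1/2, 1/2] [1] 1 1 (m, n))
          has_sum (inv_sqrt_coeff n / (2 * real n + 1) * (3 * odd_harmonic n))) UNIV" for n
    unfolding kdf_term_eq
    by (intro sums_nonneg_imp_has_sum sums_mult poch_ratio_row_sums)
       (simp add: inv_sqrt_coeff_nonneg poch_ratio_nonneg)
  show "((\<lambda>n. inv_sqrt_coeff n / (2 * real n + 1) * (3 * odd_harmonic n)) has_sum (3 * pi * ln 2)) UNIV"
    using has_sum_cmult_right[OF inv_sqrt_coeff_odd_harmonic_has_sum, of 3]
    by (simp add: mult_ac)
qed

end
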